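(* There exist maps $A,B:\{0,1\}^n\to(\{a,b\}\cup\{\epsilon\})^{t}$ with $t=O(n)$, say $A(x)=(\alpha_1,\dots,\alpha_t)$ and $B(y)=(\beta_1,\dots,\beta_t)$, such that for every $(x,y)$ in the domain $D_n$ of $PIP_2$, the word $\alpha_1\beta_1\alpha_2\beta_2\cdots\alpha_t\beta_t$ belongs to $L_5$ if and only if $PIP_2(x,y)=1$. Consequently $N^1(L_5)(O(n))\ge N^1(PIP_2)(n)$, i.e. any lower bound $N^1(PIP_2)=\Omega(n)$ would give $N^1(L_5)=\Omega(n)$.
   Context: $L_5$ is the language recognized by the deterministic automaton with states $1,2,3,4,5$, initial state $1$, accepting set $\{5\}$, and transitions $\delta(1,a)=\delta(1,b)=2$, $\delta(2,a)=5$, $\delta(2,b)=3$, $\delta(3,a)=4$, $\delta(3,b)=5$, $\delta(4,a)=3$, $\delta(4,b)=1$, $\delta(5,a)=\delta(5,b)=5$. $\epsilon$ denotes the empty word. $PIP_2$ is the promise function with domain $D_n\subseteq\{0,1\}^n\times\{0,1\}^n$ consisting of all $(x,y)$ with $\sum_{i}x_iy_i$ odd, together with all $(x,y)$ with $\sum_ix_iy_i$ even such that for every $i$: if $x_i=0,y_i=1$ then $\sum_{j<i}x_jy_j$ is even, and if $x_i=1,y_i=0$ then $\sum_{j<i}x_jy_j$ is odd; on $D_n$, $PIP_2(x,y)=1$ iff $\sum_ix_iy_i$ is odd. Alice holds $x$, Bob holds $y$. $N^1$ denotes non-deterministic communication complexity (for a promise function, covering of the 1-inputs by rectangles containing no 0-input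 of the domain); for $L_5$, $N^1(L_5)(n)$ is that of the problem where Alice receives $a_1,a_3,\dots,a_{2n-1}$, Bob receives $a_2,\dots,a_{2n}$, each in $\{a,b,\epsilon\}$, deciding whether $a_1\cdots a_{2n}\in L_5$. *)

theory Defs
  imports Main
begin

datatype letter = La | Lb

definition delta5 :: "nat \<Rightarrow> letter \<Rightarrow> nat" where
  "delta5 q c = (if q = 1 then 2
     else if q = 2 then (if c = La then 5 else 3)
     else if q = 3 then (if c = La then 4 else 5)
     else if q = 4 then (if c = La then 3 else 1)
     else if q = 5 then 5 else q)"

definition L5 :: "letter list set" where
  "L5 = {w. foldl delta5 1 w = 5}"

text \<open>A symbol of the alphabet {a, b, epsilon}; None is the empty word.\<close>
definition sym_word :: "letter option \<Rightarrow> letter list" where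
  "sym_word s = (case s of None \<Rightarrow> [] | Some c \<Rightarrow> [c])"

definition interleave :: "letter option list \<Rightarrow> letter option list \<Rightarrow> letter list" where
  "interleave as bs = concat (map (\<lambda>(\<alpha>, \<beta>). sym_word \<alpha> @ sym_word \<beta>) (zip as bs))"

definition ip_prefix :: "bool list \<Rightarrow> bool list \<Rightarrow> nat \<Rightarrow> nat" where
  "ip_prefix x y i = card {j. j < i \<and> x ! j \<and> y ! j}"

definition PIP2_dom :: "nat \<Rightarrow> (bool list \<times> bool list) set" where
  "PIP2_dom n = {(x, y). length x = n \<and> length y = n \<and>
     (odd (ip_prefix x y n) \<or>
      (even (ip_prefix x y n) \<and>
       (\<forall>i<n. (\<not> x ! i \<and> y ! i \<longrightarrow> even (ip_prefix x y i)) \<and>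
              (x ! i \<and> \<not> y ! i \<longrightarrow> odd (ip_prefix x y i)))))}"

definition PIP2 :: "bool list \<times> bool list \<Rightarrow> bool" where
  "PIP2 p = odd (ip_prefix (fst p) (snd p) (length (fst p)))"

definition N1 :: "'a set \<Rightarrow> 'b set \<Rightarrow> ('a \<times> 'b) set \<Rightarrow> ('a \<times> 'b \<Rightarrow> bool) \<Rightarrow> nat" where
  "N1 X Y D f = (LEAST m. \<exists>R :: nat \<Rightarrow> 'a set \<times> 'b set.
      (\<forall>i<2^m. fst (R i) \<subseteq> X \<and> snd (R i) \<subseteq> Y \<and>
               (\<forall>p\<in>D. p \<in> fst (R i) \<times> snd (R i) \<longrightarrow> f p)) \<and>
      (\<forall>p\<in>D. f p \<longrightarrow> (\<exists>i<2^m. p \<in> fst (R i) \<times> snd (R i))))"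

definition N1_PIP2 :: "nat \<Rightarrow> nat" where
  "N1_PIP2 n = N1 {x. length x = n} {y. length y = n} (PIP2_dom n) PIP2"

definition N1_L5 :: "nat \<Rightarrow> nat" where
  "N1_L5 n = N1 {as. length as = n} {bs. length bs = n}
     ({as. length as = n} \<times> {bs. length bs = n})
     (\<lambda>(as, bs). interleave as bs \<in> L5)"

end

theory Submission
  imports Defs
begin

text \<open>
  Alice and Bob translate every coordinate of their inputs into a block of three
  symbols each, and Alice appends a final b.  Reading the interleaved word, the automaton for
  L5 keeps, as long as the promise of PIP2 has not been violated, the parity of the inner
  product computed so far in its state (state 1 = even, state 3 = odd); a violation of the
  promise sends it to the accepting sink 5.  The final b accepts exactly from states 3 and 5.
  On the promise domain a violation only happens when the inner product is odd, so the word
  is accepted iff PIP2 (x, y) = 1.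
\<close>

section \<open>Non-deterministic covers and reductions\<close>

definition N1_cover ::
    "'a set \<Rightarrow> 'b set \<Rightarrow> ('a \<times> 'b) set \<Rightarrow> ('a \<times> 'b \<Rightarrow> bool) \<Rightarrow> nat \<Rightarrow> (nat \<Rightarrow> 'a set \<times> 'b set) \<Rightarrow> bool"
  where
  "N1_cover X Y D f m R \<longleftrightarrow>
     (\<forall>i<2^m. fst (R i) \<subseteq> X \<and> snd (R i) \<subseteq> Y \<and>
              (\<forall>p\<in>D. p \<in> fst (R i) \<times> snd (R i) \<longrightarrow> f p)) \<and>
     (\<forall>p\<in>D. f p \<longrightarrow> (\<exists>i<2^m. p \<in> fst (R i) \<times> snd (R i)))"

lemma N1_eq_Least_cover: "N1 X Y D f = (LEAST m. \<exists>R. N1_cover X Y D f m R)"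
  unfolding N1_def N1_cover_def ..

lemma N1_le_cover: "N1_cover X Y D f m R \<Longrightarrow> N1 X Y D f \<le> m"
  unfolding N1_eq_Least_cover by (rule Least_le) blast

text \<open>A finite domain always admits a cover: one singleton rectangle per 1-input.\<close>
lemma N1_cover_finite_domain:
  assumes "finite D" and "D \<subseteq> X \<times> Y"
  shows "\<exists>m R. N1_cover X Y D f m R"
proof -
  obtain ps where ps: "set ps = {p \<in> D. f p}"
    using finite_list[of "{p \<in> D. f p}"] assms(1) by auto
  define R where "R i = (if i < length ps then ({fst (ps ! i)}, {snd (ps ! i)}) else ({}, {}))" for i :: nat
  have rect: "fst (R i) \<times> snd (R i) = (if i < length ps then {ps ! i} else {})" for i :: nat
    by (simp add: R_def)
  have one_input: "ps ! i \<in> D \<and> f (ps ! i)" if "i < length ps" for i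
    using ps nth_mem[OF that] by auto
  have "N1_cover X Y D f (length ps) R"
    unfolding N1_cover_def
  proof (intro conjI allI impI ballI)
    fix i :: nat
    show "fst (R i) \<subseteq> X" "snd (R i) \<subseteq> Y"
      using one_input[of i] assms(2) by (auto simp: R_def mem_Times_iff)
    fix p assume "p \<in> fst (R i) \<times> snd (R i)"
    then have "i < length ps \<and> p = ps ! i" by (simp add: rect split: if_splits)
    then show "f p" using one_input by blast
  next
    fix p assume "p \<in> D" "f p"
    then obtain i where "i < length ps" "p = ps ! i" using ps by (metis in_set_conv_nth mem_Collect_eq)
    then have "i < 2 ^ length ps" "p \<in> fst (R i) \<times> snd (R i)"
      using less_exp[of "length ps"] by (linarith, simp add: rect)
    then show "\<exists>i<2 ^ length ps. p \<in> fst (R i) \<times> snd (R i)" by blast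
  qed
  then show ?thesis by blast
qed

lemma N1_attained:
  assumes "finite D" and "D \<subseteq> X \<times> Y"
  shows "\<exists>R. N1_cover X Y D f (N1 X Y D f) R"
  unfolding N1_eq_Least_cover by (rule LeastI_ex) (rule N1_cover_finite_domain[OF assms])

text \<open>Reduction: if f agrees on D with g applied to (A x, B y), where A and B map into the
  finite input sets of g, then the preimages of a cover for g form a cover for f.\<close>
lemma N1_reduction:
  assumes fin: "finite X'" "finite Y'"
    and A: "\<forall>x\<in>X. A x \<in> X'" and B: "\<forall>y\<in>Y. B y \<in> Y'"
    and D: "D \<subseteq> X \<times> Y"
    and fg: "\<forall>(x, y)\<in>D. f (x, y) = g (A x, B y)"
  shows "N1 X Y D f \<le> N1 X' Y' (X' \<times> Y') g"
proof -
  let ?m = "N1 X' Y' (X' \<times> Y') g"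
  obtain R where R: "N1_cover X' Y' (X' \<times> Y') g ?m R"
    using N1_attained[of "X' \<times> Y'" X' Y' g] fin by blast
  define R' where "R' i = ({x\<in>X. A x \<in> fst (R i)}, {y\<in>Y. B y \<in> snd (R i)})" for i :: nat
  have image_of_D: "(A x, B y) \<in> X' \<times> Y' \<and> f (x, y) = g (A x, B y)" if "(x, y) \<in> D" for x y
    using that A B D fg by auto
  have "N1_cover X Y D f ?m R'"
    unfolding N1_cover_def
  proof (intro conjI allI impI ballI)
    fix i :: nat
    show "fst (R' i) \<subseteq> X" "snd (R' i) \<subseteq> Y" by (auto simp: R'_def)
    assume i: "i < 2 ^ ?m"
    fix p assume p: "p \<in> D" "p \<in> fst (R' i) \<times> snd (R' i)"
    obtain x y where xy: "p = (x, y)" by fastforce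
    have "(A x, B y) \<in> fst (R i) \<times> snd (R i)" using p(2) by (simp add: xy R'_def)
    with R i image_of_D[of x y] p(1) have "g (A x, B y)"
      unfolding N1_cover_def xy by blast
    with image_of_D[of x y] p(1) show "f p" by (simp add: xy)
  next
    fix p assume p: "p \<in> D" "f p"
    obtain x y where xy: "p = (x, y)" by fastforce
    with p image_of_D[of x y] have "(A x, B y) \<in> X' \<times> Y'" "g (A x, B y)" by auto
    with R obtain i where "i < 2 ^ ?m" "(A x, B y) \<in> fst (R i) \<times> snd (R i)"
      unfolding N1_cover_def by blast
    moreover have "x \<in> X" "y \<in> Y" using p(1) D by (auto simp: xy)
    ultimately show "\<exists>i<2 ^ ?m. p \<in> fst (R' i) \<times> snd (R' i)"
      by (auto simp: xy R'_def)
  qed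
  then show ?thesis by (rule N1_le_cover)
qed

lemma finite_symbol_lists: "finite {as :: letter option list. length as = t}"
proof -
  have "(UNIV :: letter set) = {La, Lb}" using letter.exhaust by auto
  then have "finite (UNIV :: letter option set)"
    by (metis finite.emptyI finite_insert finite_option_UNIV)
  then show ?thesis using finite_lists_length_eq[of "UNIV :: letter option set" t] by simp
qed

section \<open>The block gadget\<close>

definition alice_block :: "bool \<Rightarrow> letter option list" where
  "alice_block a = (if a then [Some La, Some La, Some La] else [None, None, Some La])"

definition bob_block :: "bool \<Rightarrow> letter option list" where
  "bob_block b = (if b then [Some Lb, Some Lb, Some Lb] else [Some La, Some Lb, Some Lb])"

definition block_word :: "bool \<Rightarrow> bool \<Rightarrow> letter list" where
  "block_word a b = interleave (alice_block a) (bob_block b)"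

lemma block_word_values:
  "block_word False False = [La, Lb, La, Lb]"
  "block_word True False = [La, La, La, Lb, La, Lb]"
  "block_word False True = [Lb, Lb, La, Lb]"
  "block_word True True = [La, Lb, La, Lb, La, Lb]"
  by (simp_all add: block_word_def alice_block_def bob_block_def interleave_def sym_word_def)

definition parity_state :: "nat \<Rightarrow> nat" where
  "parity_state p = (if odd p then 3 else 1)"

lemma block_step:
  "foldl delta5 (parity_state p) (block_word a b) =
     (if (\<not> a \<and> b \<and> odd p) \<or> (a \<and> \<not> b \<and> even p) then 5
      else parity_state (p + (if a \<and> b then 1 else 0)))"
  by (cases a; cases b; cases "odd p")
     (simp_all add: block_word_values parity_state_def delta5_def)

lemma sink_state: "foldl delta5 5 w = 5"
  by (induction w) (auto simp: delta5_def)

lemma ip_prefix_Suc: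
  "ip_prefix x y (Suc i) = ip_prefix x y i + (if x ! i \<and> y ! i then 1 else 0)"
proof -
  have "{j. j < Suc i \<and> x ! j \<and> y ! j} =
        {j. j < i \<and> x ! j \<and> y ! j} \<union> (if x ! i \<and> y ! i then {i} else {})"
    by (auto simp: less_Suc_eq)
  then show ?thesis unfolding ip_prefix_def by (auto simp: card_insert_if)
qed

definition promise_at :: "bool list \<Rightarrow> bool list \<Rightarrow> nat \<Rightarrow> bool" where
  "promise_at x y i \<longleftrightarrow>
     (\<not> x ! i \<and> y ! i \<longrightarrow> even (ip_prefix x y i)) \<and>
     (x ! i \<and> \<not> y ! i \<longrightarrow> odd (ip_prefix x y i))"

lemma run_blocks:
  assumes "length x = n" "length y = n" "k \<le> n"
  shows "foldl delta5 1 (concat (map2 block_word (take k x) (take k y))) =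
           (if \<forall>i<k. promise_at x y i then parity_state (ip_prefix x y k) else 5)"
  using assms(3)
proof (induction k)
  case 0
  then show ?case by (simp add: parity_state_def ip_prefix_def)
next
  case (Suc k)
  then have "k < n" by simp
  with assms have split:
    "concat (map2 block_word (take (Suc k) x) (take (Suc k) y)) =
       concat (map2 block_word (take k x) (take k y)) @ block_word (x ! k) (y ! k)"
    by (simp add: take_Suc_conv_app_nth)
  have run_k: "foldl delta5 1 (concat (map2 block_word (take k x) (take k y))) =
      (if \<forall>i<k. promise_at x y i then parity_state (ip_prefix x y k) else 5)"
    using Suc \<open>k < n\<close> by simp
  show ?case
  proof (cases "\<forall>i<k. promise_at x y i")
    case True
    with run_k show ?thesis
      by (simp add: split block_step promise_at_def ip_prefix_Suc less_Suc_eq)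
  next
    case False
    have "foldl delta5 1 (concat (map2 block_word (take k x) (take k y))) = 5"
      using run_k[unfolded if_not_P[OF False]] .
    with False show ?thesis by (auto simp: split sink_state less_Suc_eq)
  qed
qed

section \<open>The reduction from PIP2 to L5\<close>

definition alice_map :: "bool list \<Rightarrow> letter option list" where
  "alice_map x = concat (map alice_block x) @ [Some Lb]"

definition bob_map :: "bool list \<Rightarrow> letter option list" where
  "bob_map y = concat (map bob_block y) @ [None]"

lemma length_alice_map: "length (alice_map x) = 3 * length x + 1"
  by (induction x) (auto simp: alice_map_def alice_block_def)

lemma length_bob_map: "length (bob_map y) = 3 * length y + 1"
  by (induction y) (auto simp: bob_map_def bob_block_def)

lemma interleave_append:
  "length as = length bs \<Longrightarrow> interleave (as @ as') (bs @ bs') = interleave as bs @ interleave as' bs'"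
  by (simp add: interleave_def)

lemma interleave_maps:
  "length x = length y \<Longrightarrow>
     interleave (alice_map x) (bob_map y) = concat (map2 block_word x y) @ [Lb]"
proof (induction x arbitrary: y)
  case Nil
  then show ?case by (simp add: alice_map_def bob_map_def interleave_def sym_word_def)
next
  case (Cons a x)
  then obtain b y' where "y = b # y'" "length x = length y'" by (cases y) auto
  with Cons.IH show ?case
    using interleave_append[of "alice_block a" "bob_block b"]
    by (simp add: alice_map_def bob_map_def block_word_def alice_block_def bob_block_def)
qed

lemma reduction_correct:
  assumes "(x, y) \<in> PIP2_dom n"
  shows "(interleave (alice_map x) (bob_map y) \<in> L5) = PIP2 (x, y)"
proof -
  have len: "length x = n" "length y = n" using assms by (auto simp: PIP2_dom_def)
  have accept: "(interleave (alice_map x) (bob_map y) \<in> L5) \<longleftrightarrow>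
      delta5 (foldl delta5 1 (concat (map2 block_word x y))) Lb = 5"
    unfolding interleave_maps[of x y, OF len(1)[folded len(2)]] L5_def by simp
  have run: "foldl delta5 1 (concat (map2 block_word x y)) =
      (if \<forall>i<n. promise_at x y i then parity_state (ip_prefix x y n) else 5)"
    using run_blocks[OF len order_refl] len by simp
  have promise: "odd (ip_prefix x y n) \<or> (\<forall>i<n. promise_at x y i)"
    using assms unfolding PIP2_dom_def promise_at_def mem_Collect_eq prod.case by blast
  have pip2_value: "PIP2 (x, y) \<longleftrightarrow> odd (ip_prefix x y n)"
    using len by (simp add: PIP2_def)
  show ?thesis
  proof (cases "\<forall>i<n. promise_at x y i")
    case True
    then show ?thesis unfolding accept run pip2_value by (simp add: parity_state_def delta5_def)
  next
    case False
    with promise show ?thesis unfolding accept run if_not_P[OF False] pip2_value by (simp add: delta5_def)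
  qed
qed

theorem mainTheorem17:
  shows "\<exists>c::nat. \<forall>n. \<exists>t \<le> c * n + c.
     (\<exists>A B :: bool list \<Rightarrow> letter option list.
        (\<forall>x. length x = n \<longrightarrow> length (A x) = t) \<and>
        (\<forall>y. length y = n \<longrightarrow> length (B y) = t) \<and>
        (\<forall>(x, y) \<in> PIP2_dom n. (interleave (A x) (B y) \<in> L5) = PIP2 (x, y)))
     \<and> N1_L5 t \<ge> N1_PIP2 n"
proof (intro exI allI)
  fix n :: nat
  let ?t = "3 * n + 1"
  have correct: "\<forall>(x, y) \<in> PIP2_dom n. (interleave (alice_map x) (bob_map y) \<in> L5) = PIP2 (x, y)"
    by (clarify, rule reduction_correct)
  then have maps: "(\<forall>x. length x = n \<longrightarrow> length (alice_map x) = ?t) \<and>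
        (\<forall>y. length y = n \<longrightarrow> length (bob_map y) = ?t) \<and>
        (\<forall>(x, y) \<in> PIP2_dom n. (interleave (alice_map x) (bob_map y) \<in> L5) = PIP2 (x, y))"
    by (simp add: length_alice_map length_bob_map)
  have "N1_PIP2 n \<le> N1_L5 ?t"
    unfolding N1_PIP2_def N1_L5_def
  proof (rule N1_reduction[where A = alice_map and B = bob_map])
    show "PIP2_dom n \<subseteq> {x. length x = n} \<times> {y. length y = n}"
      by (auto simp: PIP2_dom_def)
    show "\<forall>(x, y)\<in>PIP2_dom n. PIP2 (x, y) =
        (case (alice_map x, bob_map y) of (as, bs) \<Rightarrow> interleave as bs \<in> L5)"
      using correct by auto
  qed (simp_all add: finite_symbol_lists length_alice_map length_bob_map)
  moreover have "?t \<le> 3 * n + 3" by simp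
  ultimately show "?t \<le> 3 * n + 3 \<and>
     (\<exists>A B. (\<forall>x. length x = n \<longrightarrow> length (A x) = ?t) \<and>
        (\<forall>y. length y = n \<longrightarrow> length (B y) = ?t) \<and>
        (\<forall>(x, y) \<in> PIP2_dom n. (interleave (A x) (B y) \<in> L5) = PIP2 (x, y)))
     \<and> N1_L5 ?t \<ge> N1_PIP2 n"
    using maps by blast
qed

end
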